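(* Let $\Phi$ be a countable set of contexts and $\Xi$ a countable set of human trajectories. Let $P(\phi)$ be a probability distribution on $\Phi$, and for each $\phi\in\Phi$ let $P(\cdot\mid\phi)$ (ground truth) and $P_\theta(\cdot\mid\phi)$ (learned model) be probability distributions on $\Xi$. Fix a robot trajectory $\xi_R$ and a bounded real-valued cost $C(\xi_R\mid\xi_H,\phi)$, $\xi_H\in\Xi$, $\phi\in\Phi$. Define $$\ell(\theta)=\sum_{\phi}P(\phi)\left|\sum_{\xi_H}C(\xi_R\mid\xi_H,\phi)P(\xi_H\mid\phi)-\sum_{\xi_H}C(\xi_R\mid\xi_H,\phi)P_\theta(\xi_H\mid\phi)\right|,$$ $C_{\max}(\phi)=\sup_{\xi_H\in\Xi}|C(\xi_R\mid\xi_H,\phi)|$, and $C_{\max}=\sup_{\phi}C_{\max}(\phi)$. For a threshold $\delta>0$ with $p_\delta:=\mathbb{E}_{P(\phi)}[\mathbb{I}(C_{\max}(\phi)\ge\delta)]>0$, define the transition distribution $P_T(\phi)=P(\phi)\mathbb{I}(C_{\max}(\phi)\ge\delta)/p_\delta$ and $Q(\phi)=\tfrac12P(\phi)+\tfrac12P_T(\phi)$. Then: (i) if $\sum_\phi P(\phi)\sum_{\xi_H}|P(\xi_H\mid\phi)-P_\theta(\xi_H\mid\phi)|\le\epsilon$, then $\ell(\theta)\le C_{\max}\,\epsilon$; (ii) if $\sum_\phi Q(\phi)\sum_{\xi_H}|P(\xi_H\mid\phi)-P_\theta(\xi_H\mid\phi)|\le\epsilon$, then $\ell(\theta)\le 2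\max\big(\delta,\;C_{\max}\,\mathbb{E}_{P(\phi)}[\mathbb{I}(C_{\max}(\phi)\ge\delta)]\big)\,\epsilon$.
   Context: "Bounded loss of $\epsilon$" of a model on a distribution over contexts means that the expected (over that context distribution) $L^1$ distance between the ground-truth conditional distribution of future human trajectories and the model's conditional distribution is at most $\epsilon$. $\mathbb{I}$ denotes the indicator function. $\ell(\theta)$ measures, in expectation over contexts drawn from $P(\phi)$, the absolute difference between the expected cost of the fixed robot plan $\xi_R$ under the true human-trajectory distribution and under the model's distribution. *)

theory Defs
  imports "HOL-Probability.Probability"
begin

text \<open>Countable context type 'c (Phi), countable human-trajectory type 'h (Xi),
  robot trajectory type 'r. Distributions are pmfs; sums over countable sets are infsums.\<close>

definition loss :: "'c pmf \<Rightarrow> ('c \<Rightarrow> 'h pmf) \<Rightarrow> ('c \<Rightarrow> 'h pmf) \<Rightarrow>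
    ('r \<Rightarrow> 'h \<Rightarrow> 'c \<Rightarrow> real) \<Rightarrow> 'r \<Rightarrow> real" where
  "loss P Pgt Pth C xiR =
     (\<Sum>\<^sub>\<infinity>\<phi>. pmf P \<phi> *
        \<bar>(\<Sum>\<^sub>\<infinity>\<xi>. C xiR \<xi> \<phi> * pmf (Pgt \<phi>) \<xi>) - (\<Sum>\<^sub>\<infinity>\<xi>. C xiR \<xi> \<phi> * pmf (Pth \<phi>) \<xi>)\<bar>)"

definition Cmax_ctx :: "('r \<Rightarrow> 'h \<Rightarrow> 'c \<Rightarrow> real) \<Rightarrow> 'r \<Rightarrow> 'c \<Rightarrow> real" where
  "Cmax_ctx C xiR \<phi> = (SUP \<xi>. \<bar>C xiR \<xi> \<phi>\<bar>)"

definition Cmax :: "('r \<Rightarrow> 'h \<Rightarrow> 'c \<Rightarrow> real) \<Rightarrow> 'r \<Rightarrow> real" where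
  "Cmax C xiR = (SUP \<phi>. Cmax_ctx C xiR \<phi>)"

definition p_delta :: "'c pmf \<Rightarrow> ('r \<Rightarrow> 'h \<Rightarrow> 'c \<Rightarrow> real) \<Rightarrow> 'r \<Rightarrow> real \<Rightarrow> real" where
  "p_delta P C xiR \<delta> =
     (\<Sum>\<^sub>\<infinity>\<phi>. pmf P \<phi> * (if Cmax_ctx C xiR \<phi> \<ge> \<delta> then 1 else 0))"

definition P_T :: "'c pmf \<Rightarrow> ('r \<Rightarrow> 'h \<Rightarrow> 'c \<Rightarrow> real) \<Rightarrow> 'r \<Rightarrow> real \<Rightarrow> 'c \<Rightarrow> real" where
  "P_T P C xiR \<delta> \<phi> =
     pmf P \<phi> * (if Cmax_ctx C xiR \<phi> \<ge> \<delta> then 1 else 0) / p_delta P C xiR \<delta>"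

definition Qmix :: "'c pmf \<Rightarrow> ('r \<Rightarrow> 'h \<Rightarrow> 'c \<Rightarrow> real) \<Rightarrow> 'r \<Rightarrow> real \<Rightarrow> 'c \<Rightarrow> real" where
  "Qmix P C xiR \<delta> \<phi> = 1/2 * pmf P \<phi> + 1/2 * P_T P C xiR \<delta> \<phi>"

definition exp_L1 :: "('c \<Rightarrow> real) \<Rightarrow> ('c \<Rightarrow> 'h pmf) \<Rightarrow> ('c \<Rightarrow> 'h pmf) \<Rightarrow> real" where
  "exp_L1 w Pgt Pth =
     (\<Sum>\<^sub>\<infinity>\<phi>. w \<phi> * (\<Sum>\<^sub>\<infinity>\<xi>. \<bar>pmf (Pgt \<phi>) \<xi> - pmf (Pth \<phi>) \<xi>\<bar>))"

end

theory Submission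
  imports Defs
begin

text \<open>In each context, the two expected costs differ by at most \<open>C\<^sub>m\<^sub>a\<^sub>x(\<phi>)\<close> times the
  \<open>L\<^sup>1\<close> distance of the two conditionals, so the loss is at most the \<open>P\<close>-expectation of
  \<open>C\<^sub>m\<^sub>a\<^sub>x(\<phi>)\<close> times that distance. Both bounds then follow from a pointwise comparison
  of weights: \<open>P(\<phi>) C\<^sub>m\<^sub>a\<^sub>x(\<phi>) \<le> C\<^sub>m\<^sub>a\<^sub>x P(\<phi>)\<close> for (i), and for (ii)
  \<open>P(\<phi>) C\<^sub>m\<^sub>a\<^sub>x(\<phi>) \<le> 2 max(\<delta>, C\<^sub>m\<^sub>a\<^sub>x p\<^sub>\<delta>) Q(\<phi>)\<close>, which holds because \<open>Q(\<phi>) \<ge> P(\<phi>)/2\<close>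
  always and \<open>Q(\<phi>) \<ge> P(\<phi>)/(2 p\<^sub>\<delta>)\<close> on the contexts where \<open>C\<^sub>m\<^sub>a\<^sub>x(\<phi>) \<ge> \<delta>\<close>.\<close>

lemma summable_on_real_comparison:
  fixes f g :: "'a \<Rightarrow> real"
  assumes "g summable_on A" and "\<And>x. x \<in> A \<Longrightarrow> \<bar>f x\<bar> \<le> g x"
  shows "f summable_on A"
proof -
  have "(\<lambda>x. \<bar>f x\<bar>) summable_on A"
    by (rule summable_on_comparison_test[OF assms(1)]) (use assms(2) in auto)
  then show ?thesis
    unfolding summable_on_iff_abs_summable_on_real[of f A] real_norm_def .
qed

lemma summable_on_pmf: "pmf p summable_on A"
  by (meson abs_summable_equivalent pmf_abs_summable abs_summable_summable)

lemma infsum_pmf_UNIV: "(\<Sum>\<^sub>\<infinity>x. pmf p x) = 1"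
  using infsetsum_infsum[OF pmf_abs_summable[of p UNIV]] infsetsum_pmf_eq_1[of p UNIV] by simp

definition pmf_L1_dist :: "'a pmf \<Rightarrow> 'a pmf \<Rightarrow> real" where
  "pmf_L1_dist p q = (\<Sum>\<^sub>\<infinity>x. \<bar>pmf p x - pmf q x\<bar>)"

lemma exp_L1_conv_pmf_L1_dist:
  "exp_L1 w Pgt Pth = (\<Sum>\<^sub>\<infinity>\<phi>. w \<phi> * pmf_L1_dist (Pgt \<phi>) (Pth \<phi>))"
  unfolding exp_L1_def pmf_L1_dist_def ..

lemma pmf_L1_dist_nonneg: "0 \<le> pmf_L1_dist p q"
  unfolding pmf_L1_dist_def by (rule infsum_nonneg) simp

lemma
  fixes p q :: "'a pmf"
  shows summable_on_abs_pmf_diff: "(\<lambda>x. \<bar>pmf p x - pmf q x\<bar>) summable_on UNIV"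
    and pmf_L1_dist_le_2: "pmf_L1_dist p q \<le> 2"
proof -
  have abs_diff_le: "\<bar>pmf p x - pmf q x\<bar> \<le> pmf p x + pmf q x" for x
    using pmf_nonneg[of p x] pmf_nonneg[of q x] by linarith
  have sum: "(\<lambda>x. pmf p x + pmf q x) summable_on UNIV"
    by (intro summable_on_add summable_on_pmf)
  show diff: "(\<lambda>x. \<bar>pmf p x - pmf q x\<bar>) summable_on UNIV"
    by (rule summable_on_real_comparison[OF sum]) (simp add: abs_diff_le)
  have "pmf_L1_dist p q \<le> (\<Sum>\<^sub>\<infinity>x. pmf p x + pmf q x)"
    unfolding pmf_L1_dist_def by (rule infsum_mono[OF diff sum abs_diff_le])
  also have "\<dots> = 2"
    using infsum_add[OF summable_on_pmf[of p] summable_on_pmf[of q]]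
      infsum_pmf_UNIV[of p] infsum_pmf_UNIV[of q] by simp
  finally show "pmf_L1_dist p q \<le> 2" .
qed

lemma abs_infsum_diff_le_pmf_L1_dist:
  fixes p q :: "'a pmf" and f :: "'a \<Rightarrow> real"
  assumes f_bound: "\<And>x. \<bar>f x\<bar> \<le> c"
  shows "\<bar>(\<Sum>\<^sub>\<infinity>x. f x * pmf p x) - (\<Sum>\<^sub>\<infinity>x. f x * pmf q x)\<bar> \<le> c * pmf_L1_dist p q"
proof -
  have summable: "(\<lambda>x. f x * pmf r x) summable_on UNIV" for r
    by (rule summable_on_real_comparison
          [OF summable_on_cmult_right[OF summable_on_pmf[of r], of c]])
       (simp add: abs_mult mult_right_mono[OF f_bound pmf_nonneg])
  have summable_neg: "(\<lambda>x. - (f x * pmf q x)) summable_on UNIV"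
    using summable[of q] by (simp add: summable_on_uminus)
  have "(\<Sum>\<^sub>\<infinity>x. f x * pmf p x) - (\<Sum>\<^sub>\<infinity>x. f x * pmf q x)
      = (\<Sum>\<^sub>\<infinity>x. f x * pmf p x - f x * pmf q x)"
    using infsum_add[OF summable summable_neg] infsum_uminus[of "\<lambda>x. f x * pmf q x" UNIV] by simp
  also have "\<bar>\<dots>\<bar> \<le> (\<Sum>\<^sub>\<infinity>x. c * \<bar>pmf p x - pmf q x\<bar>)"
  proof -
    have summable_diff: "(\<lambda>x. f x * pmf p x - f x * pmf q x) summable_on UNIV"
      using summable_on_add[OF summable summable_neg] by simp
    have summable_bound: "(\<lambda>x. c * \<bar>pmf p x - pmf q x\<bar>) summable_on UNIV"
      by (intro summable_on_cmult_right summable_on_abs_pmf_diff)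
    have pointwise: "\<bar>f x * pmf p x - f x * pmf q x\<bar> \<le> c * \<bar>pmf p x - pmf q x\<bar>" for x
    proof -
      have "\<bar>f x * pmf p x - f x * pmf q x\<bar> = \<bar>f x\<bar> * \<bar>pmf p x - pmf q x\<bar>"
        by (simp add: abs_mult right_diff_distrib[symmetric])
      also have "\<dots> \<le> c * \<bar>pmf p x - pmf q x\<bar>"
        by (rule mult_right_mono[OF f_bound]) simp
      finally show ?thesis .
    qed
    show ?thesis
      using norm_infsum_le[OF has_sum_infsum[OF summable_diff] has_sum_infsum[OF summable_bound]]
        pointwise by simp
  qed
  also have "\<dots> = c * pmf_L1_dist p q"
    unfolding pmf_L1_dist_def by (rule infsum_cmult_right')
  finally show ?thesis .
qed

lemma Qmix_nonneg:
  assumes "0 < p_delta P C xiR \<delta>"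
  shows "0 \<le> Qmix P C xiR \<delta> \<phi>"
  using assms by (simp add: Qmix_def P_T_def)

lemma summable_on_Qmix:
  assumes p_delta_pos: "0 < p_delta P C xiR \<delta>"
  shows "Qmix P C xiR \<delta> summable_on UNIV"
proof (rule summable_on_real_comparison[OF summable_on_cmult_right[OF summable_on_pmf]])
  fix \<phi>
  show "\<bar>Qmix P C xiR \<delta> \<phi>\<bar> \<le> (1 + 1 / p_delta P C xiR \<delta>) * pmf P \<phi>"
    using p_delta_pos pmf_nonneg[of P \<phi>] by (simp add: Qmix_def P_T_def field_simps)
qed

context
  fixes C :: "'r \<Rightarrow> 'h \<Rightarrow> 'c \<Rightarrow> real" and xiR :: 'r and B :: real
  assumes C_bound: "\<And>\<xi> \<phi>. \<bar>C xiR \<xi> \<phi>\<bar> \<le> B"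
begin

lemma abs_le_Cmax_ctx: "\<bar>C xiR \<xi> \<phi>\<bar> \<le> Cmax_ctx C xiR \<phi>"
  unfolding Cmax_ctx_def by (rule cSUP_upper) (auto intro: bdd_aboveI C_bound)

lemma Cmax_ctx_nonneg: "0 \<le> Cmax_ctx C xiR \<phi>"
  using abs_le_Cmax_ctx[of undefined \<phi>] by linarith

lemma Cmax_ctx_le_bound: "Cmax_ctx C xiR \<phi> \<le> B"
  unfolding Cmax_ctx_def by (rule cSUP_least) (auto simp: C_bound)

lemma Cmax_ctx_le_Cmax: "Cmax_ctx C xiR \<phi> \<le> Cmax C xiR"
  unfolding Cmax_def by (rule cSUP_upper) (auto intro: bdd_aboveI Cmax_ctx_le_bound)

lemma Cmax_nonneg: "0 \<le> Cmax C xiR"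
  using Cmax_ctx_nonneg Cmax_ctx_le_Cmax order_trans by blast

lemma pmf_Cmax_ctx_le_Cmax: "pmf P \<phi> * Cmax_ctx C xiR \<phi> \<le> Cmax C xiR * pmf P \<phi>"
  using mult_left_mono[OF Cmax_ctx_le_Cmax pmf_nonneg] by (simp add: mult.commute)

lemma pmf_Cmax_ctx_le_Qmix:
  assumes p_delta_pos: "0 < p_delta P C xiR \<delta>"
  shows "pmf P \<phi> * Cmax_ctx C xiR \<phi>
    \<le> 2 * max \<delta> (Cmax C xiR * p_delta P C xiR \<delta>) * Qmix P C xiR \<delta> \<phi>"
proof (cases "\<delta> \<le> Cmax_ctx C xiR \<phi>")
  case True
  let ?p = "p_delta P C xiR \<delta>"
  have two_Qmix: "2 * Qmix P C xiR \<delta> \<phi> = pmf P \<phi> + pmf P \<phi> / ?p"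
    using True by (simp add: Qmix_def P_T_def)
  have "pmf P \<phi> * Cmax_ctx C xiR \<phi> \<le> Cmax C xiR * pmf P \<phi>"
    by (rule pmf_Cmax_ctx_le_Cmax)
  also have "\<dots> \<le> Cmax C xiR * ?p * (2 * Qmix P C xiR \<delta> \<phi>)"
    using p_delta_pos Cmax_nonneg pmf_nonneg[of P \<phi>] by (simp add: two_Qmix field_simps)
  also have "\<dots> \<le> max \<delta> (Cmax C xiR * ?p) * (2 * Qmix P C xiR \<delta> \<phi>)"
    using Qmix_nonneg[OF p_delta_pos] by (intro mult_right_mono) auto
  finally show ?thesis by (simp add: mult.assoc mult.left_commute)
next
  case False
  let ?M = "max \<delta> (Cmax C xiR * p_delta P C xiR \<delta>)"
  have two_Qmix: "2 * Qmix P C xiR \<delta> \<phi> = pmf P \<phi>"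
    using False by (simp add: Qmix_def P_T_def)
  have "pmf P \<phi> * Cmax_ctx C xiR \<phi> \<le> pmf P \<phi> * ?M"
    using False by (intro mult_left_mono) auto
  also have "\<dots> = ?M * (2 * Qmix P C xiR \<delta> \<phi>)"
    by (simp add: two_Qmix mult.commute)
  finally show ?thesis by (simp add: ac_simps)
qed

lemma loss_le_exp_L1:
  assumes w_summable: "w summable_on UNIV" and w_nonneg: "\<And>\<phi>. 0 \<le> w \<phi>"
    and weight_le: "\<And>\<phi>. pmf P \<phi> * Cmax_ctx C xiR \<phi> \<le> K * w \<phi>"
  shows "loss P Pgt Pth C xiR \<le> K * exp_L1 w Pgt Pth"
proof -
  define d where "d \<phi> = pmf_L1_dist (Pgt \<phi>) (Pth \<phi>)" for \<phi>
  define g where "g \<phi> = \<bar>(\<Sum>\<^sub>\<infinity>\<xi>. C xiR \<xi> \<phi> * pmf (Pgt \<phi>) \<xi>)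
      - (\<Sum>\<^sub>\<infinity>\<xi>. C xiR \<xi> \<phi> * pmf (Pth \<phi>) \<xi>)\<bar>" for \<phi>
  have d_nonneg: "0 \<le> d \<phi>" and d_le_2: "d \<phi> \<le> 2" for \<phi>
    unfolding d_def by (rule pmf_L1_dist_nonneg pmf_L1_dist_le_2)+
  have g_le: "g \<phi> \<le> Cmax_ctx C xiR \<phi> * d \<phi>" for \<phi>
    unfolding g_def d_def by (rule abs_infsum_diff_le_pmf_L1_dist abs_le_Cmax_ctx)+
  have g_nonneg: "0 \<le> g \<phi>" for \<phi>
    unfolding g_def by simp
  have g_le_bound: "g \<phi> \<le> 2 * B" for \<phi>
    using g_le[of \<phi>] Cmax_ctx_nonneg[of \<phi>] Cmax_ctx_le_bound[of \<phi>] d_nonneg[of \<phi>]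
      d_le_2[of \<phi>] mult_mono[of "Cmax_ctx C xiR \<phi>" B "d \<phi>" 2] by linarith
  have summable_Pg: "(\<lambda>\<phi>. pmf P \<phi> * g \<phi>) summable_on UNIV"
    by (rule summable_on_real_comparison
          [OF summable_on_cmult_right[OF summable_on_pmf[of P], of "2 * B"]])
       (use mult_left_mono[OF g_le_bound pmf_nonneg] g_nonneg in \<open>simp add: abs_mult mult.commute\<close>)
  have summable_wd: "(\<lambda>\<phi>. K * (w \<phi> * d \<phi>)) summable_on UNIV"
    by (intro summable_on_cmult_right
          summable_on_real_comparison[OF summable_on_cmult_right[OF w_summable, of 2]])
       (use mult_left_mono[OF d_le_2 w_nonneg] in
         \<open>simp add: abs_mult w_nonneg d_nonneg mult.commute\<close>)
  have "loss P Pgt Pth C xiR = (\<Sum>\<^sub>\<infinity>\<phi>. pmf P \<phi> * g \<phi>)"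
    unfolding loss_def g_def ..
  also have "\<dots> \<le> (\<Sum>\<^sub>\<infinity>\<phi>. K * (w \<phi> * d \<phi>))"
  proof (rule infsum_mono[OF summable_Pg summable_wd])
    fix \<phi>
    have "pmf P \<phi> * g \<phi> \<le> pmf P \<phi> * Cmax_ctx C xiR \<phi> * d \<phi>"
      using mult_left_mono[OF g_le pmf_nonneg] by (simp add: mult.assoc)
    also have "\<dots> \<le> K * w \<phi> * d \<phi>"
      by (rule mult_right_mono[OF weight_le d_nonneg])
    finally show "pmf P \<phi> * g \<phi> \<le> K * (w \<phi> * d \<phi>)" by (simp add: mult.assoc)
  qed
  also have "\<dots> = K * exp_L1 w Pgt Pth"
    unfolding exp_L1_conv_pmf_L1_dist d_def by (rule infsum_cmult_right')
  finally show ?thesis .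
qed

end

theorem lemma1:
  fixes P :: "'c::countable pmf"
    and Pgt Pth :: "'c \<Rightarrow> 'h::countable pmf"
    and C :: "'r \<Rightarrow> 'h \<Rightarrow> 'c \<Rightarrow> real"
    and xiR :: 'r
    and \<delta> \<epsilon> :: real
  assumes bounded: "\<exists>B. \<forall>\<xi> \<phi>. \<bar>C xiR \<xi> \<phi>\<bar> \<le> B"
    and delta_pos: "\<delta> > 0"
    and pdelta_pos: "p_delta P C xiR \<delta> > 0"
  shows "(exp_L1 (pmf P) Pgt Pth \<le> \<epsilon> \<longrightarrow> loss P Pgt Pth C xiR \<le> Cmax C xiR * \<epsilon>)
       \<and> (exp_L1 (Qmix P C xiR \<delta>) Pgt Pth \<le> \<epsilon> \<longrightarrow>
            loss P Pgt Pth C xiR \<le> 2 * max \<delta> (Cmax C xiR * p_delta P C xiR \<delta>) * \<epsilon>)"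
proof -
  obtain B where C_bound: "\<And>\<xi> \<phi>. \<bar>C xiR \<xi> \<phi>\<bar> \<le> B"
    using bounded by blast
  have "loss P Pgt Pth C xiR \<le> Cmax C xiR * exp_L1 (pmf P) Pgt Pth"
    by (intro loss_le_exp_L1[of C xiR B, OF C_bound summable_on_pmf] pmf_nonneg
        pmf_Cmax_ctx_le_Cmax[of C xiR B, OF C_bound])
  moreover have "loss P Pgt Pth C xiR
      \<le> 2 * max \<delta> (Cmax C xiR * p_delta P C xiR \<delta>) * exp_L1 (Qmix P C xiR \<delta>) Pgt Pth"
    by (intro loss_le_exp_L1[of C xiR B, OF C_bound summable_on_Qmix[OF pdelta_pos]]
        Qmix_nonneg[OF pdelta_pos] pmf_Cmax_ctx_le_Qmix[of C xiR B, OF C_bound pdelta_pos])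
  moreover have "0 \<le> 2 * max \<delta> (Cmax C xiR * p_delta P C xiR \<delta>)"
    using delta_pos by simp
  ultimately show ?thesis
    using Cmax_nonneg[of C xiR B, OF C_bound] by (meson mult_left_mono order_trans)
qed

end
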